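(* Let $n\ge 2$, let $A_1,\dots,A_n$ be $n$ pairwise distinct points in the plane, and let $\Gamma$ be a circle with centre $O$. Suppose that for every $k\in\{1,2,\dots,n-1\}$ the quantity $\sum_{i=1}^n |PA_i|^{2k}$ does not depend on the position of the point $P\in\Gamma$. Then $A_1,\dots,A_n$ are the vertices of a regular $n$-gon inscribed in a circle centred at $O$.
   Context: $|PA|$ denotes Euclidean distance. For $n=2$ a "regular $2$-gon inscribed in a circle centred at $O$" means two distinct points symmetric with respect to $O$. *)

theory Defs
  imports Complex_Main
begin

text \<open>For n = 2 this is a pair of distinct points symmetric about Oc.\<close>

definition regular_ngon_centred :: "complex \<Rightarrow> nat \<Rightarrow> complex set \<Rightarrow> bool" where
  "regular_ngon_centred Oc n S \<longleftrightarrow>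
     (\<exists>R::real. R > 0 \<and> (\<exists>\<theta>::real.
        S = {Oc + complex_of_real R * cis (\<theta> + 2 * pi * real j / real n) | j. j < n}))"

end

theory Submission
  imports Defs "HOL-Computational_Algebra.Polynomial"
begin

(* Translate so that the centre is the origin and write b_i = A_i - O.
   (1) On the circle |w| = r one has w |w - b|^2 = (w - b)(r^2 - conj(b) w).  Hence if
       sum_i |w - b_i|^(2k) equals a constant c on the circle, the polynomial
       Q(w) = sum_i ((w - b_i)(r^2 - conj(b_i) w))^k - c w^k vanishes on infinitely many
       points, so Q = 0; its constant coefficient (-r^2)^k sum_i b_i^k gives
       sum_i b_i^k = 0.  Thus the power sums p_1, ..., p_(n-1) of b_1, ..., b_n vanish.
   (2) A Newton-type argument: for p = prod_i (X - b_i) and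
       S_s = sum_j b_j^s prod_(i ~= j) (X - b_i) one has p' = S_0 and
       X S_s = p_s p + S_(s+1).  Vanishing power sums give X^(n-1) (X p' - n p) = S_n,
       of degree < n, so X p' - n p is constant, forcing p = X^n + p(0).
       Hence all b_i^n equal one constant c, which is nonzero as the b_i are distinct.
   (3) The n distinct b_i then exhaust the n roots of z^n = c, which form a regular n-gon
       centred at the origin. *)

lemma circle_infinite:
  assumes "(r::real) > 0"
  shows "infinite {w::complex. cmod w = r}"
proof
  assume fin: "finite {w::complex. cmod w = r}"
  define f where "f = (\<lambda>x::real. Complex x (sqrt (r^2 - x^2)))"
  have "f ` {0..r} \<subseteq> {w. cmod w = r}"
  proof
    fix w assume "w \<in> f ` {0..r}"
    then obtain x where x: "x \<in> {0..r}" "w = f x" by auto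
    have "x^2 \<le> r^2" using x by (auto intro: power_mono)
    then show "w \<in> {w. cmod w = r}" using x assms by (simp add: f_def cmod_def)
  qed
  moreover have "inj_on f {0..r}" unfolding inj_on_def f_def by simp
  ultimately have "finite {0..r}" using fin finite_subset finite_imageD by metis
  then show False using assms infinite_Icc by blast
qed

lemma poly_vanishing_on_circle:
  fixes Q :: "complex poly"
  assumes "r > 0" and "\<And>w. cmod w = r \<Longrightarrow> poly Q w = 0"
  shows "Q = 0"
proof (rule ccontr)
  assume "Q \<noteq> 0"
  then have "finite {w. poly Q w = 0}" by (rule poly_roots_finite)
  moreover have "{w. cmod w = r} \<subseteq> {w. poly Q w = 0}" using assms(2) by auto
  ultimately show False using circle_infinite[OF assms(1)] finite_subset by blast
qed

text \<open>On the circle of radius r the squared distance to b is, up to the factor w,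
  a polynomial in w: this makes the moments of distances polynomial on the circle.\<close>

lemma circle_distance_identity:
  fixes w b :: complex
  assumes "cmod w = r"
  shows "(w - b) * (of_real (r^2) - cnj b * w) = w * of_real (cmod (w - b)^2)"
proof -
  have "w * cnj w = of_real (r^2)" using complex_norm_square[of w] assms by simp
  then show ?thesis
    unfolding complex_norm_square by (simp flip: \<open>w * cnj w = _\<close>) (simp add: algebra_simps)
qed

lemma constant_moment_imp_power_sum_zero:
  fixes B :: "nat \<Rightarrow> complex" and I :: "nat set" and r c :: real and k :: nat
  assumes "finite I" "r > 0" "k \<ge> 1"
    and const: "\<And>w. cmod w = r \<Longrightarrow> (\<Sum>i\<in>I. cmod (w - B i) ^ (2*k)) = c"
  shows "(\<Sum>i\<in>I. B i ^ k) = 0"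
proof -
  define Q where
    "Q = (\<Sum>i\<in>I. ([:-B i, 1:] * [:of_real (r^2), -cnj (B i):]) ^ k) - monom (of_real c) k"
  have "poly Q w = 0" if w: "cmod w = r" for w
  proof -
    have "poly Q w = (\<Sum>i\<in>I. ((w - B i) * (of_real (r^2) - cnj (B i) * w)) ^ k) - of_real c * w^k"
      unfolding Q_def poly_diff poly_sum poly_power poly_mult poly_monom
      by (intro arg_cong2[where f="(-)"] sum.cong refl arg_cong[where f="\<lambda>x. x^k"])
         (simp add: algebra_simps)
    also have "\<dots> = (\<Sum>i\<in>I. (w * of_real (cmod (w - B i)^2)) ^ k) - of_real c * w^k"
      by (simp only: circle_distance_identity[OF w])
    also have "\<dots> = w^k * (of_real (\<Sum>i\<in>I. cmod (w - B i) ^ (2*k)) - of_real c)"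
      by (simp add: power_mult_distrib sum_distrib_left algebra_simps flip: power_mult)
    also have "\<dots> = 0" using const[OF w] by simp
    finally show ?thesis .
  qed
  then have "Q = 0" using poly_vanishing_on_circle[OF assms(2)] by blast
  moreover have "coeff Q 0 = (- of_real (r^2))^k * (\<Sum>i\<in>I. B i ^ k)"
    using assms(3) unfolding Q_def
    by (simp add: coeff_sum coeff_mult_0 coeff_0_power sum_distrib_left sum_distrib_right
                  power_mult_distrib[symmetric] mult.commute)
  ultimately show ?thesis using assms(2) by simp
qed

definition root_poly :: "('b \<Rightarrow> 'a::comm_ring_1) \<Rightarrow> 'b set \<Rightarrow> 'a poly" where
  "root_poly B I = (\<Prod>i\<in>I. [:-B i, 1:])"

definition cofactor_sum :: "('b \<Rightarrow> 'a::comm_ring_1) \<Rightarrow> 'b set \<Rightarrow> nat \<Rightarrow> 'a poly" where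
  "cofactor_sum B I s = (\<Sum>j\<in>I. smult (B j ^ s) (\<Prod>i\<in>I-{j}. [:-B i, 1:]))"

lemma pderiv_root_poly: "pderiv (root_poly B I) = cofactor_sum B I 0"
  unfolding root_poly_def cofactor_sum_def pderiv_prod by (simp add: pderiv_pCons)

lemma X_mult_cofactor_sum:
  assumes "finite I"
  shows "[:0, 1:] * cofactor_sum B I s
           = smult (\<Sum>j\<in>I. B j ^ s) (root_poly B I) + cofactor_sum B I (Suc s)"
proof -
  have X_cofactor: "[:0, 1:] * (\<Prod>i\<in>I-{j}. [:-B i, 1:])
      = root_poly B I + smult (B j) (\<Prod>i\<in>I-{j}. [:-B i, 1:])" if "j \<in> I" for j
  proof -
    have "root_poly B I = [:-B j, 1:] * (\<Prod>i\<in>I-{j}. [:-B i, 1:])"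
      unfolding root_poly_def by (rule prod.remove[OF assms that])
    moreover have "[:0, 1:] = [:-B j, 1:] + [:B j:]" by simp
    ultimately show ?thesis by (simp add: distrib_right)
  qed
  have "[:0, 1:] * cofactor_sum B I s
      = (\<Sum>j\<in>I. smult (B j ^ s) ([:0, 1:] * (\<Prod>i\<in>I-{j}. [:-B i, 1:])))"
    unfolding cofactor_sum_def by (simp add: sum_distrib_left)
  also have "\<dots> = (\<Sum>j\<in>I. smult (B j ^ s) (root_poly B I)
                       + smult (B j ^ Suc s) (\<Prod>i\<in>I-{j}. [:-B i, 1:]))"
    by (intro sum.cong refl) (simp add: X_cofactor smult_add_right mult.commute del: mult_pCons_left)
  also have "\<dots> = smult (\<Sum>j\<in>I. B j ^ s) (root_poly B I) + cofactor_sum B I (Suc s)"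
    unfolding cofactor_sum_def by (simp add: sum.distrib smult_sum)
  finally show ?thesis .
qed

lemma degree_cofactor_sum:
  fixes B :: "'b \<Rightarrow> 'a::idom"
  assumes "finite I"
  shows "degree (cofactor_sum B I s) \<le> card I - 1"
proof -
  have "degree (\<Prod>i\<in>I-{j}. [:-B i, 1:]) \<le> card I - 1" if "j \<in> I" for j
    using degree_prod_sum_le[of "I-{j}" "\<lambda>i. [:-B i, 1:]"] assms that by (simp add: o_def)
  then show ?thesis
    unfolding cofactor_sum_def
    by (intro degree_sum_le assms) (auto intro: order.trans[OF degree_smult_le])
qed

text \<open>If the power sums of orders 1, ..., n-1 vanish (n = card I), the polynomial
  X p' - n p, whose top coefficients cancel, is a constant: X^(n-1) times it equals the
  cofactor sum S_n, which has degree below n.\<close>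

lemma euler_defect_constant:
  fixes B :: "'b \<Rightarrow> 'a::idom"
  assumes "finite I" "card I = n" "n \<ge> 1"
    and power_sums: "\<And>s. 1 \<le> s \<Longrightarrow> s \<le> n - 1 \<Longrightarrow> (\<Sum>i\<in>I. B i ^ s) = 0"
  defines "q \<equiv> [:0, 1:] * pderiv (root_poly B I) - smult (of_nat n) (root_poly B I)"
  shows "degree q = 0"
proof -
  have q_S1: "q = cofactor_sum B I 1"
    using X_mult_cofactor_sum[OF assms(1), of B 0] assms(2)
    unfolding q_def pderiv_root_poly by simp
  have shift: "[:0, 1:] ^ m * cofactor_sum B I 1 = cofactor_sum B I (m + 1)"
    if "m + 1 \<le> n" for m
    using that
  proof (induction m)
    case (Suc m)
    have "[:0, 1:] ^ Suc m * cofactor_sum B I 1 = [:0, 1:] * cofactor_sum B I (m + 1)"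
      using Suc by (simp add: mult.assoc)
    also have "\<dots> = cofactor_sum B I (Suc m + 1)"
      using X_mult_cofactor_sum[OF assms(1), of B "m + 1"] power_sums[of "m + 1"] Suc.prems
      by simp
    finally show ?case .
  qed simp
  show ?thesis
  proof (cases "q = 0")
    case False
    have "degree ([:0, 1:] ^ (n - 1) * q) = (n - 1) + degree q"
      using False by (simp add: degree_mult_eq degree_power_eq)
    moreover have "[:0, 1:] ^ (n - 1) * q = cofactor_sum B I n"
      using shift[of "n - 1"] assms(3) q_S1 by simp
    ultimately show ?thesis using degree_cofactor_sum[OF assms(1), of B n] assms(2) by simp
  qed simp
qed

text \<open>A monic polynomial p of degree n with X p' - n p constant is a binomial X^n + p(0):
  the coefficient of X^k in X p' - n p is (k - n) times that of p.\<close>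

lemma binomial_if_euler_defect_constant:
  fixes p :: "'a::field_char_0 poly"
  assumes "degree p = n" "coeff p n = 1" "n \<ge> 1"
    and "degree ([:0, 1:] * pderiv p - smult (of_nat n) p) = 0"
  shows "p = monom 1 n + [:coeff p 0:]"
proof (rule poly_eqI)
  fix k
  have middle: "coeff p (Suc m) = 0" if "Suc m < n" for m
  proof -
    have "(of_nat (Suc m) - of_nat n) * coeff p (Suc m)
            = coeff ([:0, 1:] * pderiv p - smult (of_nat n) p) (Suc m)"
      by (simp add: coeff_pderiv algebra_simps)
    also have "\<dots> = 0" by (rule coeff_eq_0) (use assms(4) in simp)
    finally show ?thesis
      using that by (metis eq_iff_diff_eq_0 less_irrefl mult_eq_0_iff of_nat_eq_iff)
  qed
  show "coeff p k = coeff (monom 1 n + [:coeff p 0:]) k"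
  proof (cases k)
    case (Suc m)
    then show ?thesis
      using middle[of m] assms(1,2) coeff_eq_0[of p k] by (cases "k < n") (auto simp: not_less)
  qed (use assms(3) in simp)
qed

lemma power_sums_vanish_imp_equal_powers:
  fixes B :: "'b \<Rightarrow> 'a::field_char_0"
  assumes "finite I" "card I = n" "n \<ge> 1"
    and "\<And>s. 1 \<le> s \<Longrightarrow> s \<le> n - 1 \<Longrightarrow> (\<Sum>i\<in>I. B i ^ s) = 0"
  shows "\<exists>c. \<forall>i\<in>I. B i ^ n = c"
proof -
  let ?p = "root_poly B I"
  have "degree ?p = n"
    unfolding root_poly_def using degree_prod_sum_eq[of I "\<lambda>i. [:-B i, 1:]"] assms(2) by simp
  moreover have "coeff ?p n = 1"
    using lead_coeff_prod[of "\<lambda>i. [:-B i, 1:]" I] \<open>degree ?p = n\<close>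
    unfolding root_poly_def by simp
  ultimately have binomial: "?p = monom 1 n + [:coeff ?p 0:]"
    using binomial_if_euler_defect_constant euler_defect_constant assms by blast
  have "B i ^ n = - coeff ?p 0" if "i \<in> I" for i
  proof -
    have "poly ?p (B i) = 0"
      unfolding root_poly_def poly_prod using assms(1) that by (auto intro: prod_zero)
    moreover have "poly ?p (B i) = B i ^ n + coeff ?p 0"
      by (subst binomial) (simp add: poly_monom)
    ultimately show ?thesis by (simp add: add_eq_0_iff)
  qed
  then show ?thesis by blast
qed

lemma regular_ngon_nth_roots:
  fixes c :: complex
  assumes "c \<noteq> 0" "n > 0"
  shows "regular_ngon_centred Oc n ((\<lambda>z. Oc + z) ` {z. z ^ n = c})"
proof -
  define R where "R = root n (cmod c)"
  define \<theta> where "\<theta> = Arg c / n"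
  have "R > 0" unfolding R_def using assms by simp
  have "{z. z ^ n = c} = (\<lambda>z. (R * cis \<theta>) * z) ` {z. z ^ n = 1}"
    using bij_betw_nth_root_unity[OF assms] unfolding R_def \<theta>_def bij_betw_def by simp
  also have "{z::complex. z ^ n = 1} = (\<lambda>j. cis (2 * pi * real j / real n)) ` {..<n}"
    using bij_betw_roots_unity[OF assms(2)] unfolding bij_betw_def by simp
  finally have "(\<lambda>z. Oc + z) ` {z. z ^ n = c}
      = {Oc + complex_of_real R * cis (\<theta> + 2 * pi * real j / real n) | j. j < n}"
    by (auto simp: image_image cis_mult mult.assoc)
  then show ?thesis unfolding regular_ngon_centred_def using \<open>R > 0\<close> by blast
qed

lemma distinct_equal_powers_are_roots:
  fixes B :: "'b \<Rightarrow> complex"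
  assumes "inj_on B I" "card I = n" "n \<ge> 2" "\<forall>i\<in>I. B i ^ n = c"
  shows "c \<noteq> 0" and "B ` I = {z. z ^ n = c}"
proof -
  have card_B: "card (B ` I) = n" using card_image[OF assms(1)] assms(2) by simp
  show "c \<noteq> 0"
  proof
    assume "c = 0"
    have "B i = 0" if "i \<in> I" for i
    proof -
      have "B i ^ n = 0" using assms(4) that \<open>c = 0\<close> by blast
      then show ?thesis by simp
    qed
    then have "B ` I \<subseteq> {0}" by blast
    then have "card (B ` I) \<le> card {0::complex}" by (rule card_mono[rotated]) simp
    then show False using card_B assms(3) by simp
  qed
  have "finite {z::complex. z ^ n = c}" using assms(3) by (intro finite_nth_roots) simp
  moreover have "B ` I \<subseteq> {z. z ^ n = c}" using assms(4) by blast
  moreover have "card (B ` I) = card {z. z ^ n = c}"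
    using card_B card_nth_roots[OF \<open>c \<noteq> 0\<close>] assms(3) by simp
  ultimately show "B ` I = {z. z ^ n = c}" using card_subset_eq by blast
qed

theorem mainTheorem1:
  fixes n :: nat and A :: "nat \<Rightarrow> complex" and Oc :: complex and r :: real
  assumes "n \<ge> 2"
    and "inj_on A {1..n}"
    and "r > 0"
    and "\<forall>k\<in>{1..n-1}. \<exists>c::real. \<forall>P. dist P Oc = r \<longrightarrow>
           (\<Sum>i=1..n. dist P (A i) ^ (2*k)) = c"
  shows "regular_ngon_centred Oc n (A ` {1..n})"
proof -
  define B where "B i = A i - Oc" for i
  have dist_shift: "dist (Oc + w) (A i) = cmod (w - B i)" for w i
    unfolding B_def dist_norm by (simp add: algebra_simps)
  have "(\<Sum>i=1..n. B i ^ s) = 0" if "1 \<le> s" "s \<le> n - 1" for s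
  proof -
    have "s \<in> {1..n-1}" using that by simp
    with assms(4) obtain c
      where c: "\<forall>P. dist P Oc = r \<longrightarrow> (\<Sum>i=1..n. dist P (A i) ^ (2*s)) = c"
      by blast
    have "(\<Sum>i=1..n. cmod (w - B i) ^ (2*s)) = c" if "cmod w = r" for w
    proof -
      have "dist (Oc + w) Oc = r" using that by (simp add: dist_norm)
      with c have "(\<Sum>i=1..n. dist (Oc + w) (A i) ^ (2*s)) = c" by blast
      then show ?thesis by (simp only: dist_shift)
    qed
    then show ?thesis
      using constant_moment_imp_power_sum_zero[of "{1..n}" r s B c] assms(3) that by simp
  qed
  then obtain c where c: "\<forall>i\<in>{1..n}. B i ^ n = c"
    using power_sums_vanish_imp_equal_powers[of "{1..n}" n B] assms(1) by auto
  have inj_B: "inj_on B {1..n}"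
  proof (rule inj_onI)
    fix x y assume "x \<in> {1..n}" "y \<in> {1..n}" "B x = B y"
    then have "A x = A y" unfolding B_def by simp
    then show "x = y" using inj_onD[OF assms(2)] \<open>x \<in> {1..n}\<close> \<open>y \<in> {1..n}\<close> by blast
  qed
  have "c \<noteq> 0" and roots: "B ` {1..n} = {z. z ^ n = c}"
    using distinct_equal_powers_are_roots[OF inj_B _ assms(1) c] by simp_all
  have "A ` {1..n} = (\<lambda>z. Oc + z) ` B ` {1..n}"
    unfolding B_def by (simp add: image_image)
  then show ?thesis using regular_ngon_nth_roots[OF \<open>c \<noteq> 0\<close>] roots assms(1) by simp
qed

end
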